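(* Let $T>0$, $\sigma:(0,\infty)^d\to\mathbb R^{d\times d}$, $\mathcal L:=\tfrac12\mathrm{Tr}(\sigma\sigma'\nabla^2)$, $b:(0,\infty)^d\to\mathbb R_+$ bounded continuous and $\mu>0$. Let $\Psi:(0,\infty)^d\to(0,\infty)$ be a strictly positive $C^2$ function and $\lambda>0$, $c$ constants such that: $\mathcal L\Psi(x)\le\lambda(1+\Psi(x))$ for $x\in(0,\infty)^d$; $\Psi(x)\to\infty$ as $x\to\bar x$ for every $\bar x\in\mathcal O$; for every $M>0$ there is $R$ with $\Psi(x)/\underline x\ge M$ whenever $\underline x\ge R$; and $c\Psi(x)\ge b(x)|\nabla\Psi(x)\sigma(x)|$ for all $x\in(0,\infty)^d$. Then for sufficiently large $L$, the function $\Phi(t,x):=e^{L(T-t)}\Psi(x)$ satisfies $-\partial_t\Phi-\mathcal L\Phi-\mu\Phi-b|\nabla\Phi\,\sigma|>0$ in $[0,T]\times(0,\infty)^d$.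
   Context: $\underline x=\sum_ix^i$; $\mathcal O=\{x\in\mathbb R_+^d:x^i=0\text{ for some }i\}$; $\nabla\Phi$ is the spatial gradient (a row vector) so $\nabla\Phi\,\sigma\in\mathbb R^d$. *)

theory Defs
  imports "HOL-Analysis.Analysis"
begin

definition pos_orthant :: "(real^'n) set" where
  "pos_orthant = {x. \<forall>i. x $ i > 0}"

definition bdry_O :: "(real^'n) set" where
  "bdry_O = {x. (\<forall>i. x $ i \<ge> 0) \<and> (\<exists>i. x $ i = 0)}"

definition partial :: "(real^'n \<Rightarrow> real) \<Rightarrow> real^'n \<Rightarrow> 'n \<Rightarrow> real" where
  "partial f x i = deriv (\<lambda>s. f (x + s *\<^sub>R axis i 1)) 0"

definition grad :: "(real^'n \<Rightarrow> real) \<Rightarrow> real^'n \<Rightarrow> real^'n" where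
  "grad f x = (\<chi> i. partial f x i)"

definition hess :: "(real^'n \<Rightarrow> real) \<Rightarrow> real^'n \<Rightarrow> real^'n^'n" where
  "hess f x = (\<chi> i j. partial (\<lambda>y. partial f y j) x i)"

definition C2_on :: "(real^'n) set \<Rightarrow> (real^'n \<Rightarrow> real) \<Rightarrow> bool" where
  "C2_on S f \<longleftrightarrow>
     (\<forall>x\<in>S. (f has_derivative (\<lambda>h. grad f x \<bullet> h)) (at x)) \<and>
     (\<forall>x\<in>S. (grad f has_derivative (\<lambda>h. transpose (hess f x) *v h)) (at x)) \<and>
     continuous_on S (hess f)"

definition gen_L :: "(real^'n \<Rightarrow> real^'n^'n) \<Rightarrow> (real^'n \<Rightarrow> real) \<Rightarrow> real^'n \<Rightarrow> real" where
  "gen_L \<sigma> f x = 1/2 * trace (\<sigma> x ** transpose (\<sigma> x) ** hess f x)"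

end

theory Submission
  imports Defs
begin

text \<open>
  All operators in the expression are homogeneous of degree one in \<open>\<Phi>\<close>, so it equals
  \<open>exp (L (T - t))\<close> times \<open>L \<Psi> - \<L>\<Psi> - \<mu> \<Psi> - b |\<nabla>\<Psi> \<sigma>|\<close>, which by the Lyapunov and gradient
  bounds is at least \<open>(L - \<lambda> - \<mu> - |c|) \<Psi> - \<lambda>\<close>. This is positive for large \<open>L\<close> because \<open>\<Psi>\<close>
  is bounded below by some \<open>m > 0\<close>: it exceeds 1 near the boundary \<open>\<O>\<close> and for large \<open>x\<close>, and
  on the remaining compact set it is a positive continuous function.
\<close>

lemma open_pos_orthant: "open (pos_orthant :: (real^'n) set)"
proof -
  have "pos_orthant = (\<Inter>i. {x::real^'n. 0 < x $ i})"
    unfolding pos_orthant_def by auto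
  moreover have "open {x::real^'n. 0 < x $ i}" for i
    by (rule open_Collect_less) (auto intro: continuous_intros)
  ultimately show ?thesis by (metis finite open_INT)
qed

lemma compact_sublevel_pos_orthant:
  fixes \<Psi> :: "real^'n \<Rightarrow> real"
  assumes cont: "continuous_on pos_orthant \<Psi>"
    and blowup: "\<forall>xb\<in>bdry_O. filterlim \<Psi> at_top (at xb within pos_orthant)"
  shows "compact {x\<in>pos_orthant. (\<Sum>i\<in>UNIV. x $ i) \<le> R \<and> \<Psi> x \<le> a}"
    (is "compact ?K")
proof -
  have "closed ?K"
    unfolding closed_sequential_limits
  proof (intro allI impI, elim conjE)
    fix X :: "nat \<Rightarrow> real^'n" and l
    assume XK: "\<forall>n. X n \<in> ?K" and Xl: "X \<longlonglongrightarrow> l"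
    have comp: "(\<lambda>n. X n $ i) \<longlonglongrightarrow> l $ i" for i
      using Xl by (rule tendsto_vec_nth)
    have nonneg: "l $ i \<ge> 0" for i
      by (rule LIMSEQ_le_const[OF comp]) (use XK in \<open>auto simp: pos_orthant_def less_imp_le\<close>)
    have "(\<lambda>n. \<Sum>i\<in>UNIV. X n $ i) \<longlonglongrightarrow> (\<Sum>i\<in>UNIV. l $ i)"
      by (intro tendsto_sum comp)
    then have sum_le: "(\<Sum>i\<in>UNIV. l $ i) \<le> R"
      by (rule LIMSEQ_le_const2) (use XK in auto)
    show "l \<in> ?K"
    proof (cases "l \<in> pos_orthant")
      case True
      then have "isCont \<Psi> l"
        using cont open_pos_orthant continuous_on_eq_continuous_at by blast
      then have "(\<lambda>n. \<Psi> (X n)) \<longlonglongrightarrow> \<Psi> l"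
        using Xl by (rule isCont_tendsto_compose)
      then have "\<Psi> l \<le> a"
        by (rule LIMSEQ_le_const2) (use XK in auto)
      then show ?thesis using True sum_le by auto
    next
      case False
      then have "l \<in> bdry_O"
        using nonneg unfolding pos_orthant_def bdry_O_def by (auto simp: not_less intro: antisym)
      then have lim: "filterlim \<Psi> at_top (at l within pos_orthant)"
        using blowup by auto
      have "filterlim X (at l within pos_orthant) sequentially"
        unfolding filterlim_at using Xl XK False by (auto intro!: always_eventually)
      then have "filterlim (\<lambda>n. \<Psi> (X n)) at_top sequentially"
        using filterlim_compose[OF lim] by blast
      then obtain n where "\<Psi> (X n) > a"
        by (metis filterlim_at_top_dense eventually_sequentially order_refl)
      moreover have "\<Psi> (X n) \<le> a"
        using XK by auto
      ultimately show ?thesis by simp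
    qed
  qed
  moreover have "?K \<subseteq> cbox 0 (\<chi> i. R)"
  proof
    fix x assume xK: "x \<in> ?K"
    then have nonneg: "\<forall>i. 0 \<le> x $ i"
      by (auto simp: pos_orthant_def less_imp_le)
    have "x $ i \<le> R" for i
      using member_le_sum[of i UNIV "\<lambda>j. x $ j"] nonneg xK by auto
    then show "x \<in> cbox 0 (\<chi> i. R)"
      using nonneg by (auto simp: mem_box_cart)
  qed
  then have "bounded ?K"
    using bounded_cbox bounded_subset by blast
  ultimately show ?thesis
    using compact_eq_bounded_closed by blast
qed

lemma pos_orthant_uniform_lower_bound:
  fixes \<Psi> :: "real^'n \<Rightarrow> real"
  assumes pos: "\<forall>x\<in>pos_orthant. \<Psi> x > 0"
    and cont: "continuous_on pos_orthant \<Psi>"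
    and blowup: "\<forall>xb\<in>bdry_O. filterlim \<Psi> at_top (at xb within pos_orthant)"
    and far: "\<forall>x\<in>pos_orthant. (\<Sum>i\<in>UNIV. x $ i) \<ge> R \<longrightarrow> \<Psi> x \<ge> 1"
  shows "\<exists>m>0. \<forall>x\<in>pos_orthant. \<Psi> x \<ge> m"
proof -
  define K where "K = {x\<in>pos_orthant. (\<Sum>i\<in>UNIV. x $ i) \<le> R \<and> \<Psi> x \<le> 1}"
  have outside: "\<Psi> x \<ge> 1" if "x \<in> pos_orthant" "x \<notin> K" for x
    using that far unfolding K_def by (cases "(\<Sum>i\<in>UNIV. x $ i) \<le> R") auto
  show ?thesis
  proof (cases "K = {}")
    case True
    then show ?thesis using outside by (intro exI[of _ 1]) auto
  next
    case False
    have "compact K"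
      unfolding K_def by (rule compact_sublevel_pos_orthant[OF cont blowup])
    moreover have K_sub: "K \<subseteq> pos_orthant"
      unfolding K_def by auto
    ultimately obtain x0 where x0: "x0 \<in> K" "\<forall>y\<in>K. \<Psi> x0 \<le> \<Psi> y"
      using continuous_attains_inf[OF _ False continuous_on_subset[OF cont]] by blast
    have "\<Psi> x \<ge> min 1 (\<Psi> x0)" if "x \<in> pos_orthant" for x
      using x0(2) outside[OF that] by (cases "x \<in> K") auto
    moreover have "\<Psi> x0 > 0"
      using x0(1) K_sub pos by auto
    ultimately show ?thesis
      by (intro exI[of _ "min 1 (\<Psi> x0)"]) auto
  qed
qed

lemma superlinear_imp_ge_one_far:
  fixes \<Psi> :: "real^'n \<Rightarrow> real"
  assumes growth: "\<forall>M>0. \<exists>R. \<forall>x\<in>pos_orthant. (\<Sum>i\<in>UNIV. x $ i) \<ge> R \<longrightarrow>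
                     \<Psi> x / (\<Sum>i\<in>UNIV. x $ i) \<ge> M"
  shows "\<exists>R. \<forall>x\<in>pos_orthant. (\<Sum>i\<in>UNIV. x $ i) \<ge> R \<longrightarrow> \<Psi> x \<ge> 1"
proof -
  obtain R0 where R0: "\<forall>x\<in>pos_orthant. (\<Sum>i\<in>UNIV. x $ i) \<ge> R0 \<longrightarrow>
                         \<Psi> x / (\<Sum>i\<in>UNIV. x $ i) \<ge> 1"
    using growth by force
  have "\<Psi> x \<ge> 1" if "x \<in> pos_orthant" "(\<Sum>i\<in>UNIV. x $ i) \<ge> max R0 1" for x
  proof -
    have "\<Psi> x / (\<Sum>i\<in>UNIV. x $ i) \<ge> 1" using R0 that by auto
    then show ?thesis using that by (simp add: le_divide_eq)
  qed
  then show ?thesis by blast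
qed

lemma deriv_cmult_eventually:
  fixes f g :: "'a::real_normed_field \<Rightarrow> 'a"
  assumes "eventually (\<lambda>s. g s = k * f s) (nhds a)" "f field_differentiable at a"
  shows "deriv g a = k * deriv f a"
proof -
  have "((\<lambda>s. k * f s) has_field_derivative k * deriv f a) (at a)"
    using assms(2) by (intro DERIV_cmult) (simp add: DERIV_deriv_iff_field_differentiable)
  then have "(g has_field_derivative k * deriv f a) (at a)"
    using DERIV_cong_ev[OF refl assms(1) refl] by blast
  then show ?thesis by (rule DERIV_imp_deriv)
qed

lemma eventually_nhds_line_in_open:
  fixes x v :: "'a::real_normed_vector"
  assumes "open S" "x \<in> S"
  shows "eventually (\<lambda>s::real. x + s *\<^sub>R v \<in> S) (nhds 0)"
proof -
  have "open ((\<lambda>s::real. x + s *\<^sub>R v) -` S)"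
    by (intro continuous_open_vimage assms(1) continuous_intros)
  then show ?thesis
    using eventually_nhds_in_open[of _ 0] assms(2) by fastforce
qed

lemma field_differentiable_along_line:
  fixes f :: "'a::real_normed_vector \<Rightarrow> real"
  assumes "(f has_derivative D) (at y)"
  shows "(\<lambda>s::real. f (y + s *\<^sub>R v)) field_differentiable at 0"
proof -
  have "((\<lambda>s::real. y + s *\<^sub>R v) has_derivative (\<lambda>h. h *\<^sub>R v)) (at 0)"
    by (auto intro!: derivative_eq_intros)
  moreover have "(f has_derivative D) (at (y + 0 *\<^sub>R v))"
    using assms by simp
  ultimately have "((\<lambda>s. f (y + s *\<^sub>R v)) has_derivative (\<lambda>h. D (h *\<^sub>R v))) (at 0)"
    by (rule has_derivative_compose)
  then show ?thesis
    by (metis differentiableI field_differentiable_def differentiable_def real_differentiable_def)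
qed

lemma partial_cmult:
  fixes \<Psi> :: "real^'n \<Rightarrow> real"
  assumes "(\<Psi> has_derivative D) (at y)"
  shows "partial (\<lambda>z. k * \<Psi> z) y j = k * partial \<Psi> y j"
  unfolding partial_def
  by (rule deriv_cmult_eventually) (auto intro: field_differentiable_along_line[OF assms])

lemma grad_cmult:
  fixes \<Psi> :: "real^'n \<Rightarrow> real"
  assumes "(\<Psi> has_derivative D) (at y)"
  shows "grad (\<lambda>z. k * \<Psi> z) y = k *\<^sub>R grad \<Psi> y"
  unfolding grad_def using partial_cmult[OF assms] by (simp add: vec_eq_iff)

lemma hess_cmult:
  fixes \<Psi> :: "real^'n \<Rightarrow> real"
  assumes S: "open S" and C2: "C2_on S \<Psi>" and x: "x \<in> S"
  shows "hess (\<lambda>z. k * \<Psi> z) x = k *\<^sub>R hess \<Psi> x"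
proof -
  have diff: "(\<Psi> has_derivative (\<lambda>h. grad \<Psi> y \<bullet> h)) (at y)" if "y \<in> S" for y
    using C2 that unfolding C2_on_def by blast
  have entry: "partial (\<lambda>y. partial (\<lambda>z. k * \<Psi> z) y j) x i
             = k * partial (\<lambda>y. partial \<Psi> y j) x i" for i j
    unfolding partial_def[of "\<lambda>y. partial (\<lambda>z. k * \<Psi> z) y j"]
      partial_def[of "\<lambda>y. partial \<Psi> y j"]
  proof (rule deriv_cmult_eventually)
    show "\<forall>\<^sub>F s in nhds 0. partial (\<lambda>z. k * \<Psi> z) (x + s *\<^sub>R axis i 1) j
                          = k * partial \<Psi> (x + s *\<^sub>R axis i 1) j"
      using eventually_nhds_line_in_open[OF S x, of "axis i 1"]
      by (rule eventually_mono) (simp add: partial_cmult[OF diff])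
    have "(grad \<Psi> has_derivative (\<lambda>h. transpose (hess \<Psi> x) *v h)) (at x)"
      using C2 x unfolding C2_on_def by blast
    then have "((\<lambda>y. grad \<Psi> y $ j) has_derivative (\<lambda>h. (transpose (hess \<Psi> x) *v h) $ j)) (at x)"
      by (rule bounded_linear.has_derivative[OF bounded_linear_vec_nth])
    then show "(\<lambda>s. partial \<Psi> (x + s *\<^sub>R axis i 1) j) field_differentiable at 0"
      unfolding grad_def vec_lambda_beta by (rule field_differentiable_along_line)
  qed
  show ?thesis
    unfolding hess_def using entry by (simp add: vec_eq_iff)
qed

lemma trace_matrix_mult_scaleR:
  "trace (A ** (k *\<^sub>R H)) = k * trace (A ** (H :: real^'n^'n))"
proof -
  have "A ** (k *\<^sub>R H) = k *\<^sub>R (A ** H)"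
    by (simp add: matrix_matrix_mult_def vec_eq_iff sum_distrib_left mult.left_commute)
  then show ?thesis
    unfolding trace_def by (simp add: sum_distrib_left)
qed

lemma gen_L_cmult:
  fixes \<Psi> :: "real^'n \<Rightarrow> real"
  assumes "open S" "C2_on S \<Psi>" "x \<in> S"
  shows "gen_L \<sigma> (\<lambda>z. k * \<Psi> z) x = k * gen_L \<sigma> \<Psi> x"
  unfolding gen_L_def hess_cmult[OF assms] trace_matrix_mult_scaleR by simp

lemma exponential_supersolution_eq:
  fixes \<Psi> :: "real^'n \<Rightarrow> real" and L T t :: real
  assumes "C2_on pos_orthant \<Psi>" "x \<in> pos_orthant"
  defines "\<Phi> \<equiv> \<lambda>s y. exp (L * (T - s)) * \<Psi> y"
  shows "- deriv (\<lambda>s. \<Phi> s x) t - gen_L \<sigma> (\<Phi> t) x - \<mu> * \<Phi> t x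
           - b x * norm (grad (\<Phi> t) x v* \<sigma> x)
         = exp (L * (T - t)) * (L * \<Psi> x - gen_L \<sigma> \<Psi> x - \<mu> * \<Psi> x
           - b x * norm (grad \<Psi> x v* \<sigma> x))"
proof -
  define E where "E = exp (L * (T - t))"
  have "((\<lambda>s. exp (L * (T - s)) * \<Psi> x) has_field_derivative - L * E * \<Psi> x) (at t)"
    unfolding E_def by (auto intro!: derivative_eq_intros)
  then have "deriv (\<lambda>s. \<Phi> s x) t = - L * E * \<Psi> x"
    unfolding \<Phi>_def by (rule DERIV_imp_deriv)
  moreover have "gen_L \<sigma> (\<Phi> t) x = E * gen_L \<sigma> \<Psi> x"
    unfolding \<Phi>_def E_def by (rule gen_L_cmult[OF open_pos_orthant assms(1,2)])
  moreover have "(\<Psi> has_derivative (\<lambda>h. grad \<Psi> x \<bullet> h)) (at x)"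
    using assms(1,2) unfolding C2_on_def by blast
  then have "norm (grad (\<Phi> t) x v* \<sigma> x) = E * norm (grad \<Psi> x v* \<sigma> x)"
    unfolding \<Phi>_def E_def by (simp add: grad_cmult scaleR_vector_matrix_assoc)
  ultimately show ?thesis
    unfolding \<Phi>_def E_def[symmetric] by (simp add: algebra_simps)
qed

lemma large_rate_margin_pos:
  fixes L P G B lam \<mu> c m :: real
  assumes "m > 0" "P \<ge> m" "lam \<ge> 0"
    and "G \<le> lam * (1 + P)" "B \<le> c * P"
    and "L \<ge> lam + \<mu> + \<bar>c\<bar> + (lam + 1) / m"
  shows "L * P - G - \<mu> * P - B > 0"
proof -
  have "(lam + 1) * m \<le> (lam + 1) * P"
    using assms(2,3) by (intro mult_left_mono) auto
  then have "(lam + 1) / m * P \<ge> lam + 1"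
    using assms(1) by (simp add: field_simps)
  moreover have "(L - lam - \<mu> - \<bar>c\<bar>) * P \<ge> (lam + 1) / m * P"
    using assms(1,2,6) by (intro mult_right_mono) auto
  moreover have "c * P \<le> \<bar>c\<bar> * P"
    using assms(1,2) by (intro mult_right_mono) auto
  ultimately show ?thesis
    using assms(4,5) by (simp add: algebra_simps)
qed

theorem lemma3p7:
  fixes T \<mu> lam c :: real
    and \<sigma> :: "real^'n \<Rightarrow> real^'n^'n"
    and b \<Psi> :: "real^'n \<Rightarrow> real"
  assumes T: "T > 0"
    and mu: "\<mu> > 0"
    and b_cont: "continuous_on pos_orthant b"
    and b_bdd: "bounded (b ` pos_orthant)"
    and b_nonneg: "\<forall>x\<in>pos_orthant. b x \<ge> 0"
    and Psi_pos: "\<forall>x\<in>pos_orthant. \<Psi> x > 0"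
    and Psi_C2: "C2_on pos_orthant \<Psi>"
    and lam: "lam > 0"
    and Lyap: "\<forall>x\<in>pos_orthant. gen_L \<sigma> \<Psi> x \<le> lam * (1 + \<Psi> x)"
    and blowup: "\<forall>xb\<in>bdry_O. filterlim \<Psi> at_top (at xb within pos_orthant)"
    and growth: "\<forall>M>0. \<exists>R. \<forall>x\<in>pos_orthant. (\<Sum>i\<in>UNIV. x $ i) \<ge> R \<longrightarrow>
                   \<Psi> x / (\<Sum>i\<in>UNIV. x $ i) \<ge> M"
    and grad_bd: "\<forall>x\<in>pos_orthant. c * \<Psi> x \<ge> b x * norm (grad \<Psi> x v* \<sigma> x)"
  shows "\<exists>L0. \<forall>L\<ge>L0. \<forall>t\<in>{0..T}. \<forall>x\<in>pos_orthant.
           (let \<Phi> = (\<lambda>s y. exp (L * (T - s)) * \<Psi> y) in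
              - deriv (\<lambda>s. \<Phi> s x) t - gen_L \<sigma> (\<Phi> t) x - \<mu> * \<Phi> t x
              - b x * norm (grad (\<Phi> t) x v* \<sigma> x) > 0)"
proof -
  have "continuous_on pos_orthant \<Psi>"
    using Psi_C2 unfolding C2_on_def
    by (meson has_derivative_continuous continuous_at_imp_continuous_on)
  then obtain m where m: "m > 0" "\<forall>x\<in>pos_orthant. \<Psi> x \<ge> m"
    using pos_orthant_uniform_lower_bound[OF Psi_pos _ blowup] superlinear_imp_ge_one_far[OF growth]
    by blast
  define L0 where "L0 = lam + \<mu> + \<bar>c\<bar> + (lam + 1) / m"
  have reduced: "L * \<Psi> x - gen_L \<sigma> \<Psi> x - \<mu> * \<Psi> x - b x * norm (grad \<Psi> x v* \<sigma> x) > 0"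
    if "L \<ge> L0" "x \<in> pos_orthant" for L x
    using that lam m Lyap grad_bd unfolding L0_def
    by (intro large_rate_margin_pos[where lam = lam and m = m and c = c]) auto
  show ?thesis
  proof (intro exI[of _ L0] allI impI ballI)
    fix L t and x :: "real^'n"
    assume "L \<ge> L0" "t \<in> {0..T}" "x \<in> pos_orthant"
    then show "let \<Phi> = (\<lambda>s y. exp (L * (T - s)) * \<Psi> y) in
              - deriv (\<lambda>s. \<Phi> s x) t - gen_L \<sigma> (\<Phi> t) x - \<mu> * \<Phi> t x
              - b x * norm (grad (\<Phi> t) x v* \<sigma> x) > 0"
      unfolding Let_def exponential_supersolution_eq[OF Psi_C2 \<open>x \<in> pos_orthant\<close>]
      using reduced by simp
  qed
qed

end
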